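(* Let $s\ge1$ be an integer, let $p$ be a prime, and let $n=p^k$ with $k\ge 2s$. Let $G=\langle p^{k-s}+1\rangle$ be the subgroup of $\mathbb{Z}_n^\times$ generated by $p^{k-s}+1$. Then the coset index function $f_G$ is a $$\left(p^k,\ (sp+p-s)p^{k-s-1},\ \bigcup_{i=0}^{s-1}\Big\{0,\ \sum_{j=0}^{i}\varphi(p^{k-j})\Big\}\right)$$ zero-difference function, where $\varphi$ is Euler's totient function.
   Context: For a subgroup $G$ of $\mathbb{Z}_n^\times$ and $r\in\mathbb{Z}_n$, the coset $rG=\{rg\mid g\in G\}$; these cosets partition $\mathbb{Z}_n$, forming a set $D_G$. The coset index function induced by $G$ is $f_G:\mathbb{Z}_n\to\mathbb{Z}_{|D_G|}$, $f_G(x)=h_G(C_x)$, where $C_x$ is the coset containing $x$ and $h_G:D_G\to\mathbb{Z}_{|D_G|}$ is a fixed bijection. A function $f:A\to B$ between finite abelian groups is an $(n,m,S)$ zero-difference function if $n=|A|$, $m=|f(A)|$, and for every nonzero $a\in A$, $|\{x\in A\mid f(x+a)=f(x)\}|\in S$. Here $A=(\mathbb{Z}_n,+)$. *)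

theory Defs
  imports "HOL-Number_Theory.Number_Theory"
begin

text \<open>Z_n is modelled as the carrier {0..<n} of naturals with arithmetic mod n.\<close>

text \<open>The subgroup of Z_n^x generated by a unit g: in a finite group this is the
  set of all powers of g.\<close>
definition cyclic_subgroup :: "nat \<Rightarrow> nat \<Rightarrow> nat set" where
  "cyclic_subgroup n g = {g ^ i mod n | i. True}"

definition coset_of :: "nat \<Rightarrow> nat set \<Rightarrow> nat \<Rightarrow> nat set" where
  "coset_of n G r = {(r * x) mod n | x. x \<in> G}"

definition coset_family :: "nat \<Rightarrow> nat set \<Rightarrow> nat set set" where
  "coset_family n G = coset_of n G ` {0..<n}"

definition coset_index_fun :: "nat \<Rightarrow> nat set \<Rightarrow> (nat set \<Rightarrow> nat) \<Rightarrow> nat \<Rightarrow> nat" where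
  "coset_index_fun n G h x = h (THE C. C \<in> coset_family n G \<and> x \<in> C)"

definition zero_difference_fun :: "nat \<Rightarrow> nat \<Rightarrow> nat set \<Rightarrow> (nat \<Rightarrow> 'b) \<Rightarrow> bool" where
  "zero_difference_fun n m S f \<longleftrightarrow>
     m = card (f ` {0..<n}) \<and>
     (\<forall>a \<in> {1..<n}. card {x \<in> {0..<n}. f ((x + a) mod n) = f x} \<in> S)"

end

theory Submission
  imports Defs
begin

(* Write q = p^(k-s). Since p^k divides q^2, we have (1 + q)^t = 1 + t q (mod p^k), so the
   coset of x is the residue class of x modulo gcd(x q, p^k) = q gcd(x, p^s), taken inside
   {0..<p^k}. Hence f(x + a) = f(x) iff q gcd(x, p^s) divides a. This never happens when q does
   not divide a; for a = q b with p^i the exact power of p dividing b (so i < s) it happens iff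
   p^(i+1) does not divide x, which gives p^k - p^(k-i-1) = sum_{j<=i} phi(p^(k-j)) solutions.
   Counting cosets through their least elements r, i.e. those with r < q gcd(r, p^s), the
   classes with gcd(r, p^s) = p^j contribute q - q/p for each j < s and q for j = s. *)

section \<open>Cosets of a cyclic group of units\<close>

lemma coset_of_cyclic_subgroup:
  "coset_of n (cyclic_subgroup n g) x = range (\<lambda>i. x * g ^ i mod n)"
proof -
  have "coset_of n (cyclic_subgroup n g) x = range (\<lambda>i. x * (g ^ i mod n) mod n)"
    unfolding coset_of_def cyclic_subgroup_def by auto
  then show ?thesis
    unfolding mod_mult_right_eq .
qed

lemma mem_coset_of_self:
  assumes "x < n"
  shows "x \<in> coset_of n (cyclic_subgroup n g) x"
  unfolding coset_of_cyclic_subgroup using assms by (intro range_eqI[where x = 0]) simp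

lemma coset_of_eq_if_mem:
  assumes "coprime n g" and "y \<in> coset_of n (cyclic_subgroup n g) x"
  shows "coset_of n (cyclic_subgroup n g) y = coset_of n (cyclic_subgroup n g) x"
proof -
  obtain i where y: "y = x * g ^ i mod n"
    using assms(2) by (auto simp: coset_of_cyclic_subgroup)
  define m where "m = ord n g"
  have "m > 0" and gm: "[g ^ m = 1] (mod n)"
    using assms(1) ord_eq_0 ord_works unfolding m_def by auto
  have from_y: "y * g ^ j mod n = x * g ^ (i + j) mod n" for j
    unfolding y by (simp add: mod_mult_left_eq power_add mult.assoc)
  have to_y: "x * g ^ j mod n = y * g ^ (j + i * (m - 1)) mod n" for j
  proof -
    have "[(g ^ m) ^ i = 1] (mod n)"
      using cong_pow[OF gm, of i] by simp
    then have cong: "[x * g ^ j * (g ^ m) ^ i = x * g ^ j] (mod n)"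
      using cong_scalar_left by fastforce
    have shift: "x * g ^ j * (g ^ m) ^ i = x * g ^ i * g ^ (j + i * (m - 1))"
    proof -
      have "i + (j + i * (m - 1)) = j + m * i"
        using \<open>m > 0\<close> by (cases m) auto
      then have "x * g ^ j * (g ^ m) ^ i = x * g ^ (i + (j + i * (m - 1)))"
        by (simp only: power_add power_mult mult.assoc)
      then show ?thesis
        by (simp only: power_add mult.assoc)
    qed
    from cong have "[x * g ^ i * g ^ (j + i * (m - 1)) = x * g ^ j] (mod n)"
      unfolding shift .
    then show ?thesis
      unfolding y cong_def mod_mult_left_eq by (rule sym)
  qed
  show ?thesis
    unfolding coset_of_cyclic_subgroup
  proof (rule equalityI)
    show "range (\<lambda>j. y * g ^ j mod n) \<subseteq> range (\<lambda>j. x * g ^ j mod n)"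
      unfolding from_y by (intro image_subsetI range_eqI) (rule refl)
    show "range (\<lambda>j. x * g ^ j mod n) \<subseteq> range (\<lambda>j. y * g ^ j mod n)"
      unfolding to_y by (intro image_subsetI range_eqI) (rule refl)
  qed
qed

lemma coset_of_eq_iff_mem:
  assumes "coprime n g" and "x < n" and "y < n"
  shows "coset_of n (cyclic_subgroup n g) y = coset_of n (cyclic_subgroup n g) x
    \<longleftrightarrow> y \<in> coset_of n (cyclic_subgroup n g) x"
  using assms coset_of_eq_if_mem mem_coset_of_self by metis

lemma coset_index_fun_eq:
  assumes "coprime n g" and "x < n"
  shows "coset_index_fun n (cyclic_subgroup n g) h x = h (coset_of n (cyclic_subgroup n g) x)"
  unfolding coset_index_fun_def
proof (rule arg_cong[where f = h], rule the_equality)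
  show "coset_of n (cyclic_subgroup n g) x \<in> coset_family n (cyclic_subgroup n g)
    \<and> x \<in> coset_of n (cyclic_subgroup n g) x"
    using assms(2) mem_coset_of_self by (auto simp: coset_family_def)
next
  fix C
  assume "C \<in> coset_family n (cyclic_subgroup n g) \<and> x \<in> C"
  then obtain z where "C = coset_of n (cyclic_subgroup n g) z" and "x \<in> C"
    by (auto simp: coset_family_def)
  then show "C = coset_of n (cyclic_subgroup n g) x"
    using assms(1) coset_of_eq_if_mem by metis
qed

lemma coset_index_fun_eq_iff:
  assumes "inj_on h (coset_family n (cyclic_subgroup n g))" and "coprime n g"
    and "x < n" and "y < n"
  shows "coset_index_fun n (cyclic_subgroup n g) h y = coset_index_fun n (cyclic_subgroup n g) h x
    \<longleftrightarrow> y \<in> coset_of n (cyclic_subgroup n g) x"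
proof -
  have "coset_of n (cyclic_subgroup n g) z \<in> coset_family n (cyclic_subgroup n g)" if "z < n" for z
    using that by (simp add: coset_family_def)
  then have "h (coset_of n (cyclic_subgroup n g) y) = h (coset_of n (cyclic_subgroup n g) x)
      \<longleftrightarrow> coset_of n (cyclic_subgroup n g) y = coset_of n (cyclic_subgroup n g) x"
    using assms(1,3,4) by (simp add: inj_on_eq_iff)
  then show ?thesis
    using assms(2-4) by (simp add: coset_index_fun_eq coset_of_eq_iff_mem)
qed

lemma card_image_coset_index_fun:
  assumes "inj_on h (coset_family n (cyclic_subgroup n g))" and "coprime n g"
  shows "card (coset_index_fun n (cyclic_subgroup n g) h ` {0..<n})
    = card (coset_family n (cyclic_subgroup n g))"
proof -
  have "coset_index_fun n (cyclic_subgroup n g) h ` {0..<n} = h ` coset_family n (cyclic_subgroup n g)"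
    using assms(2) by (simp add: coset_family_def coset_index_fun_eq image_image)
  then show ?thesis
    using assms(1) by (simp add: card_image)
qed

section \<open>The group generated by 1 + q when n divides q^2\<close>

lemma one_plus_power_cong:
  fixes n q :: nat
  assumes "n dvd q * q"
  shows "[(q + 1) ^ i = 1 + i * q] (mod n)"
proof (induction i)
  case 0
  show ?case by simp
next
  case (Suc i)
  have "[(q + 1) ^ Suc i = (1 + i * q) * (q + 1)] (mod n)"
    unfolding power_Suc2 using Suc.IH cong_refl by (rule cong_mult)
  also have "(1 + i * q) * (q + 1) = (1 + Suc i * q) + i * (q * q)"
    by (simp add: algebra_simps)
  also have "[(1 + Suc i * q) + i * (q * q) = 1 + Suc i * q] (mod n)"
    unfolding cong_add_lcancel_0_nat cong_0_iff using assms by (rule dvd_mult)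
  finally show ?case .
qed

lemma coprime_one_plus:
  fixes n q :: nat
  assumes "n dvd q * q"
  shows "coprime n (q + 1)"
proof -
  have "coprime (q * q) (q + 1)"
    by simp
  then show ?thesis
    using assms coprime_divisors dvd_refl by blast
qed

lemma coset_of_one_plus:
  fixes n q x :: nat
  assumes "n dvd q * q" and "x < n"
  shows "coset_of n (cyclic_subgroup n (q + 1)) x = {y. y < n \<and> [y = x] (mod gcd (x * q) n)}"
proof -
  define d where "d = gcd (x * q) n"
  have d_dvd: "d dvd n" "d dvd x * q"
    unfolding d_def by simp_all
  have coset: "coset_of n (cyclic_subgroup n (q + 1)) x = range (\<lambda>t. (x + x * q * t) mod n)"
  proof -
    have "x * (q + 1) ^ t mod n = (x + x * q * t) mod n" for t
    proof -
      have "[x * (q + 1) ^ t = x * (1 + t * q)] (mod n)"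
        using one_plus_power_cong[OF assms(1)] by (rule cong_scalar_left)
      then show ?thesis
        by (simp add: cong_def algebra_simps)
    qed
    then show ?thesis
      by (simp add: coset_of_cyclic_subgroup)
  qed
  have "z \<in> range (\<lambda>t. (x + x * q * t) mod n) \<longleftrightarrow> z < n \<and> [z = x] (mod d)" for z
  proof
    assume "z \<in> range (\<lambda>t. (x + x * q * t) mod n)"
    then obtain t where z: "z = (x + x * q * t) mod n"
      by blast
    have "[z = x + x * q * t] (mod d)"
      unfolding z using d_dvd(1) by (simp add: cong_def mod_mod_cancel)
    also have "[x + x * q * t = x] (mod d)"
      using d_dvd(2) by (simp add: cong_add_lcancel_0_nat cong_0_iff)
    finally show "z < n \<and> [z = x] (mod d)"
      using assms(2) z by simp
  next
    assume z: "z < n \<and> [z = x] (mod d)"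
    have "[z + n = z] (mod d)"
      using d_dvd(1) by (simp add: cong_add_lcancel_0_nat cong_0_iff)
    then have "[z + n = x] (mod d)"
      using z cong_trans by blast
    then obtain m where m: "z + n = m * d + x"
      using assms(2) cong_le_nat by fastforce
    obtain t where t: "[x * q * t = d * m] (mod n)"
      using cong_solve_dvd_nat[of "x * q" n "d * m"] unfolding d_def by auto
    have "[x + x * q * t = x + d * m] (mod n)"
      using cong_refl t by (rule cong_add)
    also have "x + d * m = z + n"
      using m by simp
    finally have "[x + x * q * t = z + n] (mod n)" .
    then have "(x + x * q * t) mod n = z"
      using z by (simp add: cong_def)
    then show "z \<in> range (\<lambda>t. (x + x * q * t) mod n)"
      by (metis rangeI)
  qed
  then show ?thesis
    unfolding coset d_def by blast
qed

lemma coset_index_fun_one_plus_shift_eq_iff: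
  fixes n q x a :: nat
  assumes "inj_on h (coset_family n (cyclic_subgroup n (q + 1)))"
    and "n dvd q * q" and "x < n"
  shows "coset_index_fun n (cyclic_subgroup n (q + 1)) h ((x + a) mod n)
      = coset_index_fun n (cyclic_subgroup n (q + 1)) h x
    \<longleftrightarrow> gcd (x * q) n dvd a"
proof -
  have shifted: "(x + a) mod n < n"
    using assms(3) by simp
  have "coset_index_fun n (cyclic_subgroup n (q + 1)) h ((x + a) mod n)
      = coset_index_fun n (cyclic_subgroup n (q + 1)) h x
    \<longleftrightarrow> [(x + a) mod n = x] (mod gcd (x * q) n)"
    using coset_index_fun_eq_iff[OF assms(1) coprime_one_plus[OF assms(2)] assms(3) shifted]
    unfolding coset_of_one_plus[OF assms(2,3)] using shifted by blast
  also have "\<dots> \<longleftrightarrow> [x + a = x] (mod gcd (x * q) n)"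
    by (simp add: cong_def mod_mod_cancel)
  also have "\<dots> \<longleftrightarrow> gcd (x * q) n dvd a"
    by (simp add: cong_add_lcancel_0_nat cong_0_iff)
  finally show ?thesis .
qed

section \<open>Counting modulo prime powers\<close>

lemma card_multiples_below:
  fixes d N :: nat
  assumes "d dvd N" and "d > 0"
  shows "card {x \<in> {0..<N}. d dvd x} = N div d"
proof -
  have "{x \<in> {0..<N}. d dvd x} = (*) d ` {0..<N div d}"
    using assms by (auto simp: dvd_def less_mult_imp_div_less mult.commute)
  then show ?thesis
    using \<open>d > 0\<close> by (simp add: card_image inj_on_mult)
qed

lemma card_non_multiples_below:
  fixes d N :: nat
  assumes "d dvd N" and "d > 0"
  shows "card {x \<in> {0..<N}. \<not> d dvd x} = N - N div d"
proof -
  have "{x \<in> {0..<N}. \<not> d dvd x} = {0..<N} - {x \<in> {0..<N}. d dvd x}"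
    by blast
  also have "card \<dots> = card {0..<N} - card {x \<in> {0..<N}. d dvd x}"
    by (rule card_Diff_subset) auto
  finally show ?thesis
    using card_multiples_below[OF assms] by simp
qed

lemma gcd_prime_power_dvd_iff:
  fixes p b x :: nat
  assumes "prime p" and "gcd b (p ^ s) = p ^ i" and "i < s"
  shows "gcd x (p ^ s) dvd b \<longleftrightarrow> \<not> p ^ Suc i dvd x"
proof -
  have p: "2 \<le> p"
    using assms(1) prime_ge_2_nat by blast
  obtain j where j: "gcd x (p ^ s) = p ^ j"
    using divides_primepow_nat[OF assms(1)] gcd_dvd2 by metis
  have "gcd x (p ^ s) dvd b \<longleftrightarrow> gcd x (p ^ s) dvd gcd b (p ^ s)"
    by simp
  also have "\<dots> \<longleftrightarrow> j \<le> i"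
    using j assms(2) p by (simp add: dvd_power_iff_le)
  also have "\<dots> \<longleftrightarrow> \<not> Suc i \<le> j"
    by linarith
  also have "\<dots> \<longleftrightarrow> \<not> p ^ Suc i dvd gcd x (p ^ s)"
    unfolding j dvd_power_iff_le[OF p] by (rule refl)
  also have "\<dots> \<longleftrightarrow> \<not> p ^ Suc i dvd x"
    using assms(3) le_imp_power_dvd[of "Suc i" s p] by simp
  finally show ?thesis .
qed

lemma gcd_prime_power_eq_iff:
  fixes p x :: nat
  assumes "prime p" and "j < s"
  shows "gcd x (p ^ s) = p ^ j \<longleftrightarrow> p ^ j dvd x \<and> \<not> p ^ Suc j dvd x"
proof -
  have "gcd (p ^ j) (p ^ s) = p ^ j"
    using assms(2) by (simp add: gcd_nat.absorb1 le_imp_power_dvd)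
  then have "gcd x (p ^ s) dvd p ^ j \<longleftrightarrow> \<not> p ^ Suc j dvd x"
    by (rule gcd_prime_power_dvd_iff[OF assms(1) _ assms(2)])
  moreover have "p ^ j dvd gcd x (p ^ s) \<longleftrightarrow> p ^ j dvd x"
    using assms(2) le_imp_power_dvd[of j s p] by simp
  ultimately show ?thesis
    by (metis dvd_antisym dvd_refl)
qed

lemma card_gcd_prime_power_eq:
  fixes p N :: nat
  assumes "prime p" and "j < s" and "p ^ Suc j dvd N"
  shows "card {x \<in> {0..<N}. gcd x (p ^ s) = p ^ j} = N div p ^ j - N div p ^ Suc j"
proof -
  have pos: "p ^ j > 0" "p ^ Suc j > 0"
    using assms(1) prime_gt_0_nat by simp_all
  have weaken: "p ^ j dvd x" if "p ^ Suc j dvd x" for x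
    using that power_Suc2 dvd_mult_left by metis
  have "{x \<in> {0..<N}. gcd x (p ^ s) = p ^ j}
      = {x \<in> {0..<N}. p ^ j dvd x} - {x \<in> {0..<N}. p ^ Suc j dvd x}"
    using gcd_prime_power_eq_iff[OF assms(1,2)] weaken by auto
  then have "card {x \<in> {0..<N}. gcd x (p ^ s) = p ^ j}
      = card {x \<in> {0..<N}. p ^ j dvd x} - card {x \<in> {0..<N}. p ^ Suc j dvd x}"
    using weaken by (simp add: card_Diff_subset subset_eq)
  also have "\<dots> = N div p ^ j - N div p ^ Suc j"
    by (simp only: card_multiples_below[OF weaken[OF assms(3)] pos(1)]
        card_multiples_below[OF assms(3) pos(2)])
  finally show ?thesis .
qed

lemma sum_totient_prime_powers:
  fixes p :: nat
  assumes "prime p" and "i < k"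
  shows "(\<Sum>j=0..i. totient (p ^ (k - j))) = p ^ k - p ^ (k - Suc i)"
proof -
  have totient_Suc: "totient (p ^ Suc m) = p ^ Suc m - p ^ m" for m
    using totient_prime_power_Suc[OF assms(1)] by (simp add: diff_mult_distrib2 mult.commute)
  show ?thesis
    using assms(2)
  proof (induction i)
    case 0
    then have "k = Suc (k - 1)"
      by simp
    then show ?case
      using totient_Suc[of "k - 1"] by simp
  next
    case (Suc i)
    have k: "k - Suc i = Suc (k - Suc (Suc i))"
      using Suc.prems by simp
    have "p ^ (k - Suc (Suc i)) \<le> p ^ (k - Suc i)" "p ^ (k - Suc i) \<le> p ^ k"
      using prime_ge_1_nat[OF assms(1)] by (auto intro: power_increasing)
    then show ?case
      using Suc totient_Suc[of "k - Suc (Suc i)"] by (simp add: k)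
  qed
qed

section \<open>The group generated by 1 + p^(k-s) modulo p^k\<close>

locale prime_power_cosets =
  fixes p k s :: nat
  assumes prime: "prime p" and s_pos: "1 \<le> s" and k_ge: "2 * s \<le> k"
begin

abbreviation q :: nat where "q \<equiv> p ^ (k - s)"

abbreviation G :: "nat set" where "G \<equiv> cyclic_subgroup (p ^ k) (q + 1)"

text \<open>Since each coset is a residue class modulo q gcd(r, p^s) for any of its elements r, these
  are exactly the least elements of the cosets.\<close>
abbreviation coset_minima :: "nat set" where
  "coset_minima \<equiv> {x \<in> {0..<p ^ k}. x < q * gcd x (p ^ s)}"

lemma power_k_eq: "p ^ k = q * p ^ s"
  using k_ge by (simp flip: power_add)

lemma power_s_dvd_q: "p ^ s dvd q"
  using k_ge by (simp add: le_imp_power_dvd)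

lemma power_k_dvd_q_sq: "p ^ k dvd q * q"
  unfolding power_k_eq using power_s_dvd_q by (rule mult_dvd_mono[OF dvd_refl])

lemma gcd_mult_q: "gcd (x * q) (p ^ k) = q * gcd x (p ^ s)"
  unfolding power_k_eq gcd_mult_distrib_nat by (simp add: ac_simps)

lemma card_zero_differences:
  assumes "a \<in> {1..<p ^ k}"
  shows "card {x \<in> {0..<p ^ k}. q * gcd x (p ^ s) dvd a}
    \<in> (\<Union>i\<in>{0..<s}. {0, \<Sum>j=0..i. totient (p ^ (k - j))})"
proof (cases "q dvd a")
  case False
  then have "{x \<in> {0..<p ^ k}. q * gcd x (p ^ s) dvd a} = {}"
    using dvd_mult_left by blast
  then show ?thesis
    using s_pos by auto
next
  case True
  then obtain b where b: "a = q * b" ..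
  then have "0 < b" and "b < p ^ s"
    using assms power_k_eq by auto
  obtain i where i: "gcd b (p ^ s) = p ^ i" and "i \<le> s"
    using divides_primepow_nat[OF prime] gcd_dvd2 by metis
  have "i \<noteq> s"
    using i \<open>0 < b\<close> \<open>b < p ^ s\<close> by (metis gcd_dvd1 nat_dvd_not_less)
  with \<open>i \<le> s\<close> have "i < s"
    by simp
  have "q * gcd x (p ^ s) dvd a \<longleftrightarrow> \<not> p ^ Suc i dvd x" for x
    using gcd_prime_power_dvd_iff[OF prime i \<open>i < s\<close>] b prime_gt_0_nat[OF prime] by simp
  then have "{x \<in> {0..<p ^ k}. q * gcd x (p ^ s) dvd a}
      = {x \<in> {0..<p ^ k}. \<not> p ^ Suc i dvd x}"
    by blast
  also have "card \<dots> = p ^ k - p ^ k div p ^ Suc i"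
  proof (rule card_non_multiples_below)
    show "p ^ Suc i dvd p ^ k"
      using \<open>i < s\<close> k_ge by (intro le_imp_power_dvd) simp
    show "p ^ Suc i > 0"
      using prime_gt_0_nat[OF prime] by simp
  qed
  also have "\<dots> = (\<Sum>j=0..i. totient (p ^ (k - j)))"
    using sum_totient_prime_powers[OF prime, of i k] \<open>i < s\<close> k_ge prime_gt_0_nat[OF prime]
    by (simp add: power_diff)
  finally show ?thesis
    using \<open>i < s\<close> by auto
qed

lemma gcd_power_s_cong:
  assumes "[y = x] (mod q * gcd x (p ^ s))"
  shows "gcd y (p ^ s) = gcd x (p ^ s)"
proof -
  have "[y = x] (mod p ^ s)"
    using assms power_s_dvd_q cong_dvd_modulus_nat dvd_mult2 by blast
  then show ?thesis
    by (rule cong_gcd_eq)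
qed

lemma coset_of_eq_iff:
  assumes "x < p ^ k" and "y < p ^ k"
  shows "coset_of (p ^ k) G y = coset_of (p ^ k) G x \<longleftrightarrow> [y = x] (mod q * gcd x (p ^ s))"
  using coset_of_eq_iff_mem[OF coprime_one_plus[OF power_k_dvd_q_sq] assms]
  unfolding coset_of_one_plus[OF power_k_dvd_q_sq assms(1)] gcd_mult_q
  using assms(2) by blast

lemma bij_betw_coset_representatives:
  "bij_betw (coset_of (p ^ k) G) coset_minima (coset_family (p ^ k) G)"
proof (rule bij_betw_imageI)
  show "inj_on (coset_of (p ^ k) G) coset_minima"
  proof (rule inj_onI)
    fix x y
    assume x: "x \<in> coset_minima"
      and y: "y \<in> coset_minima"
      and eq: "coset_of (p ^ k) G x = coset_of (p ^ k) G y"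
    have cong: "[y = x] (mod q * gcd x (p ^ s))"
      using coset_of_eq_iff[of x y] x y eq[symmetric] by simp
    then have "y < q * gcd x (p ^ s)"
      using y gcd_power_s_cong by simp
    then show "x = y"
      using x cong by (simp add: cong_def)
  qed
next
  have "coset_of (p ^ k) G y \<in> coset_of (p ^ k) G ` coset_minima"
    if "y < p ^ k" for y
  proof -
    let ?r = "y mod (q * gcd y (p ^ s))"
    have pos: "q * gcd y (p ^ s) > 0"
      using prime_gt_0_nat[OF prime] by simp
    have cong: "[?r = y] (mod q * gcd y (p ^ s))"
      by (simp add: cong_def)
    have "?r < p ^ k"
      using that by (meson le_less_trans mod_less_eq_dividend)
    then have "?r \<in> coset_minima"
      using pos gcd_power_s_cong[OF cong] by simp
    moreover have "coset_of (p ^ k) G y = coset_of (p ^ k) G ?r"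
      using coset_of_eq_iff[OF that \<open>?r < p ^ k\<close>] cong by blast
    ultimately show ?thesis
      by blast
  qed
  then show "coset_of (p ^ k) G ` coset_minima = coset_family (p ^ k) G"
    unfolding coset_family_def by auto
qed

lemma coset_representatives_eq_UN:
  "coset_minima = (\<Union>j\<le>s. {x \<in> {0..<q * p ^ j}. gcd x (p ^ s) = p ^ j})"
proof (intro equalityI subsetI)
  fix x
  assume x: "x \<in> coset_minima"
  obtain j where "j \<le> s" and "gcd x (p ^ s) = p ^ j"
    using divides_primepow_nat[OF prime] gcd_dvd2 by metis
  then show "x \<in> (\<Union>j\<le>s. {x \<in> {0..<q * p ^ j}. gcd x (p ^ s) = p ^ j})"
    using x by auto
next
  fix x
  assume "x \<in> (\<Union>j\<le>s. {x \<in> {0..<q * p ^ j}. gcd x (p ^ s) = p ^ j})"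
  then obtain j where "j \<le> s" and x: "x < q * p ^ j" and gcd: "gcd x (p ^ s) = p ^ j"
    by auto
  have "q * p ^ j \<le> p ^ k"
    unfolding power_k_eq using \<open>j \<le> s\<close> prime_ge_1_nat[OF prime] by (simp add: power_increasing)
  then show "x \<in> coset_minima"
    using x gcd by simp
qed

lemma card_coset_representatives_lt:
  assumes "j < s"
  shows "card {x \<in> {0..<q * p ^ j}. gcd x (p ^ s) = p ^ j} = q - q div p"
proof -
  have "p dvd q"
    using s_pos k_ge by (simp add: dvd_power)
  then have "p ^ Suc j dvd q * p ^ j"
    by (simp add: mult_dvd_mono)
  then have "card {x \<in> {0..<q * p ^ j}. gcd x (p ^ s) = p ^ j}
      = q * p ^ j div p ^ j - q * p ^ j div (p * p ^ j)"
    using card_gcd_prime_power_eq[OF prime assms] by simp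
  also have "\<dots> = q - q div p"
    using prime_gt_0_nat[OF prime] by simp
  finally show ?thesis .
qed

lemma card_coset_representatives_top:
  "card {x \<in> {0..<q * p ^ s}. gcd x (p ^ s) = p ^ s} = q"
proof -
  have pos: "p ^ s > 0"
    using prime_gt_0_nat[OF prime] by simp
  have "{x \<in> {0..<q * p ^ s}. gcd x (p ^ s) = p ^ s} = {x \<in> {0..<q * p ^ s}. p ^ s dvd x}"
    by (simp only: gcd_nat.absorb_iff2)
  also have "card \<dots> = q * p ^ s div p ^ s"
    using pos by (intro card_multiples_below) simp_all
  also have "\<dots> = q"
    using pos by simp
  finally show ?thesis .
qed

lemma card_coset_family: "card (coset_family (p ^ k) G) = (s * p + p - s) * p ^ (k - s - 1)"
proof -
  have "card (coset_family (p ^ k) G) = card coset_minima"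
    using bij_betw_coset_representatives by (simp add: bij_betw_same_card)
  also have "\<dots> = (\<Sum>j\<le>s. card {x \<in> {0..<q * p ^ j}. gcd x (p ^ s) = p ^ j})"
    unfolding coset_representatives_eq_UN
    using prime_ge_2_nat[OF prime] by (intro card_UN_disjoint) (auto simp: power_inject_exp)
  also have "\<dots> = (\<Sum>j<s. q - q div p) + q"
    using card_coset_representatives_lt card_coset_representatives_top
    by (simp add: lessThan_Suc_atMost[symmetric])
  also have "\<dots> = (s * p + p - s) * p ^ (k - s - 1)"
  proof -
    have "k - s = Suc (k - s - 1)"
      using s_pos k_ge by simp
    then have "q = p * p ^ (k - s - 1)"
      by (metis power_Suc)
    moreover have "s \<le> s * p"
      using prime_gt_0_nat[OF prime] by simp
    ultimately show ?thesis
      using prime_gt_0_nat[OF prime] by (simp add: algebra_simps diff_mult_distrib)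
  qed
  finally show ?thesis .
qed

end

theorem theorem3p7:
  fixes s p k :: nat and h :: "nat set \<Rightarrow> nat"
  assumes "s \<ge> 1" and "prime p" and "k \<ge> 2 * s"
    and "bij_betw h (coset_family (p ^ k) (cyclic_subgroup (p ^ k) (p ^ (k - s) + 1)))
           {0..<card (coset_family (p ^ k) (cyclic_subgroup (p ^ k) (p ^ (k - s) + 1)))}"
  shows "zero_difference_fun (p ^ k) ((s * p + p - s) * p ^ (k - s - 1))
           (\<Union>i\<in>{0..<s}. {0, \<Sum>j=0..i. totient (p ^ (k - j))})
           (coset_index_fun (p ^ k) (cyclic_subgroup (p ^ k) (p ^ (k - s) + 1)) h)"
proof -
  interpret prime_power_cosets p k s
    using assms(1-3) by unfold_locales
  have inj: "inj_on h (coset_family (p ^ k) G)"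
    using assms(4) by (simp add: bij_betw_def)
  have "card (coset_index_fun (p ^ k) G h ` {0..<p ^ k}) = (s * p + p - s) * p ^ (k - s - 1)"
    using card_image_coset_index_fun[OF inj coprime_one_plus[OF power_k_dvd_q_sq]] card_coset_family
    by simp
  moreover have "{x \<in> {0..<p ^ k}.
        coset_index_fun (p ^ k) G h ((x + a) mod p ^ k) = coset_index_fun (p ^ k) G h x}
      = {x \<in> {0..<p ^ k}. q * gcd x (p ^ s) dvd a}" for a
    using coset_index_fun_one_plus_shift_eq_iff[OF inj power_k_dvd_q_sq] gcd_mult_q by auto
  ultimately show ?thesis
    unfolding zero_difference_fun_def using card_zero_differences by simp
qed

end
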